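(* Let $(W_t)_{t\ge 0}$ be a standard Wiener process. Then almost surely $\|W_\cdot\|_{\widetilde A}<\infty$, where for $f\in C([0,1])$ $$\|f\|_{\widetilde A}:=\sup_{j\in\mathbb{N}_0}\ \sup_{0\le k\le j}\ \sup_{0<t<1}\ \frac{(\widetilde A_kf_j)^*(t)}{\sqrt{2^{k-j}\log(1/t)+1}}$$ and the path $W_\cdot$ is considered as the function $t\mapsto W_t$ on $[0,1]$.
   Context: Let $I=[0,1]$. For $j\in\mathbb{N}_0$ and $m\in\{0,\dots,2^j-1\}$ let $I_{j,m}=[m2^{-j},(m+1)2^{-j}]$ and let $\chi_{j,m}$ be its indicator function. For $f\in C(I)$ define $$\lambda_{j,m}(f)=-2^{j/2-1}\Big(f\big((m+1)2^{-j}\big)-2f\big((2m+1)2^{-j-1}\big)+f\big(m2^{-j}\big)\Big)$$ (the coefficients of $f$ in the expansion $f(x)=f(0)(1-x)+f(1)x+\sum_{j,m}2^{-j/2}\lambda_{j,m}v_{j,m}(x)$ in the Faber system of hat functions $v_{j,m}$ supported on $I_{j,m}$ with height $1$), and put $f_j=\sum_{m=0}^{2^j-1}\lambda_{j,m}(f)\chi_{j,m}$. For integrable $g$ on $I$ and $k\in\mathbb{N}_0$, $(A_kg)(x)=\sum_{l=0}^{2^k-1}2^k\int_{I_{k,l}}g(t)\,dt\cdot\chi_{k,l}(x)$ and $\widetilde A_kg=A_k(|g|)$. For measurable $h$ on $I$, $h^*(t)=\inf\{s\ge0:|\{x\in I:|h(x)|>s\}|\le t\}$ is the non-increasing rearrangement.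 *)

theory Defs
  imports "HOL-Probability.Probability"
begin

definition wiener_process :: "'a measure \<Rightarrow> (real \<Rightarrow> 'a \<Rightarrow> real) \<Rightarrow> bool" where
  "wiener_process M W \<longleftrightarrow>
     prob_space M \<and>
     (\<forall>t\<ge>0. W t \<in> borel_measurable M) \<and>
     (AE \<omega> in M. W 0 \<omega> = 0) \<and>
     (AE \<omega> in M. continuous_on {0..} (\<lambda>t. W t \<omega>)) \<and>
     (\<forall>s t. 0 \<le> s \<and> s < t \<longrightarrow>
        distributed M lborel (\<lambda>\<omega>. W t \<omega> - W s \<omega>) (normal_density 0 (sqrt (t - s)))) \<and>
     (\<forall>(n::nat) (ts::nat \<Rightarrow> real). 0 \<le> ts 0 \<and> (\<forall>i<n. ts i < ts (Suc i)) \<longrightarrow>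
        prob_space.indep_vars M (\<lambda>_. borel) (\<lambda>i \<omega>. W (ts (Suc i)) \<omega> - W (ts i) \<omega>) {..<n})"

definition dyad_int :: "nat \<Rightarrow> nat \<Rightarrow> real set" where
  "dyad_int j m = {real m / 2 ^ j .. (real m + 1) / 2 ^ j}"

definition dyad_chi :: "nat \<Rightarrow> nat \<Rightarrow> real \<Rightarrow> real" where
  "dyad_chi j m = indicator (dyad_int j m)"

definition faber_coeff :: "nat \<Rightarrow> nat \<Rightarrow> (real \<Rightarrow> real) \<Rightarrow> real" where
  "faber_coeff j m f =
     - (2 powr (real j / 2 - 1)) *
       (f ((real m + 1) / 2 ^ j) - 2 * f ((2 * real m + 1) / 2 ^ (j + 1)) + f (real m / 2 ^ j))"

definition faber_level :: "(real \<Rightarrow> real) \<Rightarrow> nat \<Rightarrow> real \<Rightarrow> real" where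
  "faber_level f j x = (\<Sum>m<2 ^ j. faber_coeff j m f * dyad_chi j m x)"

definition avg_op :: "nat \<Rightarrow> (real \<Rightarrow> real) \<Rightarrow> real \<Rightarrow> real" where
  "avg_op k g x = (\<Sum>l<2 ^ k. 2 ^ k * integral (dyad_int k l) g * dyad_chi k l x)"

definition avg_op_abs :: "nat \<Rightarrow> (real \<Rightarrow> real) \<Rightarrow> real \<Rightarrow> real" where
  "avg_op_abs k g = avg_op k (\<lambda>t. \<bar>g t\<bar>)"

definition rearr :: "(real \<Rightarrow> real) \<Rightarrow> real \<Rightarrow> real" where
  "rearr h t = Inf {s. 0 \<le> s \<and> measure lebesgue {x \<in> {0..1}. \<bar>h x\<bar> > s} \<le> t}"

definition tA_norm :: "(real \<Rightarrow> real) \<Rightarrow> ereal" where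
  "tA_norm f = (SUP j::nat. SUP k\<in>{..j}. SUP t\<in>{0<..<1::real}.
      ereal (rearr (avg_op_abs k (faber_level f j)) t /
             sqrt (2 powr (real k - real j) * ln (1 / t) + 1)))"

end

theory Submission
  imports Defs
begin

(* Let Z_i = 2^{j+1} (f((i+1)/2^{j+1}) - f(i/2^{j+1}))^2 be the normalised squared increments
  at level j+1.  Every Faber coefficient satisfies lambda_{j,m}^2 <= (Z_{2m} + Z_{2m+1}) / 4, so
  by AM-GM the average of |f_j| over I_{k,l} is at most e/2 + T_l / (8 e 2^{j-k}) for every e > 0,
  where T_l is the sum of the Z_i inside I_{k,l}.  As A_k f_j is a step function on the I_{k,l},
  (A_k f_j)^*(t) <= s as soon as at most 2^k t of its values exceed s.  Hence the quotient in the
  norm is at most 7/2 on every level j at which, for all k <= j and n, at most 2^k e^{-(n+2)}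
  blocks are heavy, i.e. have T_l > 12 (n + 1 + 2^{j-k}).

  For the Wiener process the Z_i are independent chi-square variables with E exp(Z_i/4) = sqrt 2.
  By Chernoff a block is heavy with probability at most 2^{2^{j-k}} e^{-3(n+1+2^{j-k})}, and as the
  T_l are independent, Chebyshev's inequality bounds the probability of too many heavy blocks by
  4e 2^{-n} 2^{-j} 2^{-(j-k)}.  Summed over n and k <= j this is O(2^{-j}), so by Borel-Cantelli
  almost every path satisfies the condition on all large levels; on the finitely many others the
  quotient is bounded by sum_m |lambda_{j,m}|. *)

(* The indices m of the dyadic intervals I_{k+d,m} contained in I_{k,l}. *)
definition dyad_block :: "nat \<Rightarrow> nat \<Rightarrow> nat set" where
  "dyad_block d l = {l * 2 ^ d ..< (l + 1) * 2 ^ d}"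

lemma card_dyad_block [simp]: "card (dyad_block d l) = 2 ^ d"
  by (simp add: dyad_block_def)

lemma dyad_block_subset:
  assumes "l < 2 ^ k"
  shows "dyad_block d l \<subseteq> {..<2 ^ (k + d)}"
proof -
  have "(l + 1) * 2 ^ d \<le> 2 ^ k * (2::nat) ^ d"
    using assms by (intro mult_le_mono1) simp
  then show ?thesis by (auto simp: dyad_block_def power_add)
qed

lemma disjoint_family_dyad_block: "disjoint_family (dyad_block d)"
proof -
  have separate: "dyad_block d a \<inter> dyad_block d b = {}" if "a < b" for a b
  proof -
    have "(a + 1) * 2 ^ d \<le> b * (2::nat) ^ d"
      using that by (intro mult_le_mono1) simp
    then show ?thesis by (auto simp: dyad_block_def)
  qed
  show ?thesis
    unfolding disjoint_family_on_def
    using separate by (metis inf_commute linorder_neqE_nat)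
qed

lemma sum_dyad_block_Suc:
  "(\<Sum>i\<in>dyad_block (Suc d) l. g i) = (\<Sum>m\<in>dyad_block d l. g (2 * m) + g (Suc (2 * m)))"
proof -
  obtain c where c: "(l + 1) * 2 ^ d = Suc c"
    using not0_implies_Suc by fastforce
  have "dyad_block d l = {l * 2 ^ d .. c}"
    using c by (auto simp: dyad_block_def)
  moreover have "dyad_block (Suc d) l = {2 * (l * 2 ^ d) .. Suc (2 * c)}"
    using c by (auto simp: dyad_block_def)
  ultimately show ?thesis
    by (simp only: sum.in_pairs)
qed

lemma dyad_chi_eq_if: "dyad_chi j m = (\<lambda>x. if x \<in> dyad_int j m then 1 else 0)"
  by (auto simp: dyad_chi_def indicator_def fun_eq_iff)

lemma dyad_int_eq_finer_level:
  assumes "k \<le> j"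
  shows "dyad_int k l = {real (l * 2 ^ (j - k)) / 2 ^ j .. real ((l + 1) * 2 ^ (j - k)) / 2 ^ j}"
proof -
  have "(2::real) ^ j = 2 ^ k * 2 ^ (j - k)"
    using assms by (simp flip: power_add)
  then show ?thesis by (simp add: dyad_int_def field_simps)
qed

lemma integral_dyad_chi:
  assumes "k \<le> j"
  shows "integral (dyad_int k l) (dyad_chi j m) = (if m \<in> dyad_block (j - k) l then 1 / 2 ^ j else 0)"
proof -
  define c :: real where "c = 2 ^ j"
  define a b where "a = real (l * 2 ^ (j - k))" and "b = real ((l + 1) * 2 ^ (j - k))"
  have c: "0 < c" by (simp add: c_def)
  have kl: "dyad_int k l = {a / c .. b / c}"
    unfolding a_def b_def c_def by (rule dyad_int_eq_finer_level[OF assms])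
  have jm: "dyad_int j m = {real m / c .. (real m + 1) / c}"
    by (simp add: dyad_int_def c_def)
  have "integral (dyad_int k l) (dyad_chi j m) = integral (dyad_int j m \<inter> dyad_int k l) (\<lambda>x. 1::real)"
    by (simp add: dyad_chi_eq_if integral_restrict_Int)
  also have "\<dots> = measure lborel ({real m / c .. (real m + 1) / c} \<inter> {a / c .. b / c})"
    unfolding jm kl by (simp add: Int_atLeastAtMost)
  also have "\<dots> = (if m \<in> dyad_block (j - k) l then 1 / c else 0)"
  proof (cases "m \<in> dyad_block (j - k) l")
    case True
    then have "real (l * 2 ^ (j - k)) \<le> real m" "real (m + 1) \<le> real ((l + 1) * 2 ^ (j - k))"
      unfolding of_nat_le_iff by (auto simp: dyad_block_def)
    then have "a \<le> real m" "real m + 1 \<le> b" by (simp_all add: a_def b_def)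
    then have "{real m / c .. (real m + 1) / c} \<inter> {a / c .. b / c} = {real m / c .. (real m + 1) / c}"
      using c by (auto simp: divide_right_mono)
    then show ?thesis
      using True c by (simp add: divide_right_mono diff_divide_distrib[symmetric])
  next
    case False
    then have "real (m + 1) \<le> real (l * 2 ^ (j - k)) \<or> real ((l + 1) * 2 ^ (j - k)) \<le> real m"
      unfolding of_nat_le_iff by (auto simp: dyad_block_def)
    then have "real m + 1 \<le> a \<or> b \<le> real m" by (simp add: a_def b_def ac_simps)
    then have "(real m + 1) / c \<le> a / c \<or> b / c \<le> real m / c"
      using c by (auto simp: divide_right_mono)
    moreover have "measure lborel ({x .. y} \<inter> {u .. v}) = 0" if "y \<le> u \<or> v \<le> x" for x y u v :: real
      using that by (auto simp: max_def min_def)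
    ultimately show ?thesis
      using False by simp
  qed
  finally show ?thesis by (simp add: c_def)
qed

lemma integrable_dyad_chi: "dyad_chi j m integrable_on dyad_int k l"
proof -
  have "(\<lambda>x. 1::real) integrable_on (dyad_int j m \<inter> dyad_int k l)"
    unfolding dyad_int_def Int_atLeastAtMost by (rule integrable_const_ivl)
  then show ?thesis
    by (simp add: dyad_chi_eq_if integrable_restrict_Int)
qed

lemma integral_abs_nonneg: "0 \<le> integral S (\<lambda>x. \<bar>g x\<bar> :: real)"
  by (cases "(\<lambda>x. \<bar>g x\<bar>) integrable_on S") (simp_all add: integral_nonneg not_integrable_integral)

lemma avg_abs_faber_level_le_block_mean:
  assumes kj: "k \<le> j" and l: "l < 2 ^ k"
  shows "2 ^ k * integral (dyad_int k l) (\<lambda>x. \<bar>faber_level f j x\<bar>)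
    \<le> (\<Sum>m\<in>dyad_block (j - k) l. \<bar>faber_coeff j m f\<bar>) / 2 ^ (j - k)"
proof -
  define g where "g x = (\<Sum>m<2 ^ j. \<bar>faber_coeff j m f\<bar> * dyad_chi j m x)" for x
  have abs_le_g: "\<bar>faber_level f j x\<bar> \<le> g x" for x
    unfolding faber_level_def g_def
    by (rule order_trans[OF sum_abs]) (simp add: abs_mult dyad_chi_def)
  have g_integrable: "g integrable_on dyad_int k l"
    unfolding g_def by (intro integrable_sum finite_lessThan integrable_on_mult_right integrable_dyad_chi)
  have block: "dyad_block (j - k) l \<subseteq> {..<2 ^ j}"
    using dyad_block_subset[OF l, of "j - k"] kj by simp
  have "integral (dyad_int k l) (\<lambda>x. \<bar>faber_level f j x\<bar>) \<le> integral (dyad_int k l) g"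
  proof (cases "(\<lambda>x. \<bar>faber_level f j x\<bar>) integrable_on dyad_int k l")
    case True
    then show ?thesis using g_integrable abs_le_g by (intro integral_le) auto
  next
    case False
    then show ?thesis
      using g_integrable abs_le_g
      by (simp add: not_integrable_integral) (meson abs_ge_zero integral_nonneg order_trans)
  qed
  also have "integral (dyad_int k l) g
      = (\<Sum>m<2 ^ j. \<bar>faber_coeff j m f\<bar> * integral (dyad_int k l) (dyad_chi j m))"
    unfolding g_def by (subst integral_sum) (auto intro: integrable_on_mult_right integrable_dyad_chi)
  also have "\<dots> = (\<Sum>m\<in>dyad_block (j - k) l. \<bar>faber_coeff j m f\<bar> / 2 ^ j)"
    using block by (intro sum.mono_neutral_cong_right) (auto simp: integral_dyad_chi[OF kj])
  finally show ?thesis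
    using kj by (simp add: sum_divide_distrib[symmetric] power_diff field_simps)
qed

lemma dyad_int_overlap:
  assumes "x \<in> dyad_int k l" "x \<in> dyad_int k l'" "l < l'"
  shows "x = real l' / 2 ^ k"
proof -
  have "(real l + 1) / 2 ^ k \<le> real l' / 2 ^ k"
    using assms(3) by (simp add: divide_right_mono)
  then show ?thesis using assms(1,2) by (auto simp: dyad_int_def)
qed

lemma abs_step_function_gt_subset:
  fixes c :: "nat \<Rightarrow> real"
  assumes "0 \<le> s"
  shows "{x. s < \<bar>\<Sum>l<N. c l * dyad_chi k l x\<bar>}
    \<subseteq> (\<Union>l\<in>{l\<in>{..<N}. s < \<bar>c l\<bar>}. dyad_int k l) \<union> range (\<lambda>i. real i / 2 ^ k)"
proof
  fix x assume x: "x \<in> {x. s < \<bar>\<Sum>l<N. c l * dyad_chi k l x\<bar>}"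
  define S where "S = {l\<in>{..<N}. x \<in> dyad_int k l}"
  have "(\<Sum>l<N. c l * dyad_chi k l x) = (\<Sum>l\<in>S. c l)"
    unfolding S_def dyad_chi_eq_if by (simp add: sum.inter_filter[symmetric] if_distrib cong: if_cong)
  with x assms obtain l0 where l0: "l0 \<in> S" by fastforce
  show "x \<in> (\<Union>l\<in>{l\<in>{..<N}. s < \<bar>c l\<bar>}. dyad_int k l) \<union> range (\<lambda>i. real i / 2 ^ k)"
  proof (cases "x \<in> range (\<lambda>i. real i / 2 ^ k)")
    case False
    have "l = l0" if "l \<in> S" for l
      using that l0 False dyad_int_overlap[of x k l l0] dyad_int_overlap[of x k l0 l]
      by (cases l l0 rule: linorder_cases) (auto simp: S_def)
    then have "S = {l0}" using l0 by blast
    with x \<open>(\<Sum>l<N. c l * dyad_chi k l x) = (\<Sum>l\<in>S. c l)\<close> l0 show ?thesis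
      by (auto simp: S_def)
  qed simp
qed

lemma measure_abs_step_function_gt_le:
  fixes c :: "nat \<Rightarrow> real"
  assumes "0 \<le> s"
  shows "measure lebesgue {x\<in>{0..1}. s < \<bar>\<Sum>l<N. c l * dyad_chi k l x\<bar>}
    \<le> real (card {l\<in>{..<N}. s < \<bar>c l\<bar>}) / 2 ^ k"
proof -
  define A where "A = {x\<in>{0..1}. s < \<bar>\<Sum>l<N. c l * dyad_chi k l x\<bar>}"
  define G where "G = {l\<in>{..<N}. s < \<bar>c l\<bar>}"
  define U where "U = (\<Union>l\<in>G. dyad_int k l)"
  define P where "P = range (\<lambda>i. real i / 2 ^ k)"
  have P_null: "P \<in> null_sets lebesgue"
    unfolding P_def by (intro null_sets_completionI countable_imp_null_set_lborel) simp
  have U_fin: "U \<in> fmeasurable lebesgue"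
    unfolding U_def G_def by (intro fmeasurable.finite_UN) (auto simp: dyad_int_def)
  show ?thesis
  proof (cases "A \<in> sets lebesgue")
    case False
    then show ?thesis by (simp add: A_def measure_notin_sets)
  next
    case True
    have "A \<subseteq> U \<union> P"
      using abs_step_function_gt_subset[OF assms, where N = N and c = c and k = k] by (auto simp: A_def U_def G_def P_def)
    then have "measure lebesgue A \<le> measure lebesgue (U \<union> P)"
      using True U_fin fmeasurableI_null_sets[OF P_null] by (intro measure_mono_fmeasurable) auto
    also have "\<dots> \<le> measure lebesgue U + measure lebesgue P"
      using U_fin P_null by (intro measure_Un_le) auto
    also have "measure lebesgue U \<le> (\<Sum>l\<in>G. measure lebesgue (dyad_int k l))"
      unfolding U_def G_def by (intro measure_UNION_le) (auto simp: dyad_int_def)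
    also have "\<dots> = (\<Sum>l\<in>G. 1 / 2 ^ k)"
      by (intro sum.cong refl) (simp add: dyad_int_def divide_right_mono diff_divide_distrib[symmetric])
    also have "\<dots> = real (card G) / 2 ^ k"
      by simp
    finally show ?thesis
      using P_null by (simp add: A_def G_def measure_eq_0_null_sets)
  qed
qed

lemma rearr_step_function_le:
  fixes c :: "nat \<Rightarrow> real"
  assumes "0 \<le> s" and "real (card {l\<in>{..<N}. s < \<bar>c l\<bar>}) \<le> 2 ^ k * t"
  shows "rearr (\<lambda>x. \<Sum>l<N. c l * dyad_chi k l x) t \<le> s"
  unfolding rearr_def
proof (rule cInf_lower)
  have "measure lebesgue {x \<in> {0..1}. s < \<bar>\<Sum>l<N. c l * dyad_chi k l x\<bar>}
      \<le> real (card {l\<in>{..<N}. s < \<bar>c l\<bar>}) / 2 ^ k"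
    by (rule measure_abs_step_function_gt_le[OF assms(1)])
  also have "\<dots> \<le> t"
    using assms(2) by (simp add: pos_divide_le_eq mult.commute)
  finally show "s \<in> {s. 0 \<le> s \<and> measure lebesgue {x \<in> {0..1}. \<bar>\<Sum>l<N. c l * dyad_chi k l x\<bar> > s} \<le> t}"
    using assms(1) by simp
  show "bdd_below {s. 0 \<le> s \<and> measure lebesgue {x \<in> {0..1}. \<bar>\<Sum>l<N. c l * dyad_chi k l x\<bar> > s} \<le> t}"
    by (rule bdd_belowI[of _ 0]) simp
qed

lemma avg_op_abs_eq:
  "avg_op_abs k g = (\<lambda>x. \<Sum>l<2 ^ k. (2 ^ k * integral (dyad_int k l) (\<lambda>t. \<bar>g t\<bar>)) * dyad_chi k l x)"
  by (simp add: fun_eq_iff avg_op_abs_def avg_op_def)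

section \<open>Faber coefficients and squared increments\<close>

definition scaled_sq_incr :: "(real \<Rightarrow> real) \<Rightarrow> nat \<Rightarrow> nat \<Rightarrow> real" where
  "scaled_sq_incr f j i = 2 ^ j * (f (real (Suc i) / 2 ^ j) - f (real i / 2 ^ j))\<^sup>2"

lemma faber_coeff_sq_le:
  "(faber_coeff j m f)\<^sup>2 \<le> (scaled_sq_incr f (Suc j) (2 * m) + scaled_sq_incr f (Suc j) (Suc (2 * m))) / 4"
proof -
  define u v w where "u = f (real (2 * m) / 2 ^ Suc j)" and "v = f (real (Suc (2 * m)) / 2 ^ Suc j)"
    and "w = f (real (Suc (Suc (2 * m))) / 2 ^ Suc j)"
  have dyadic_points: "(real m + 1) / 2 ^ j = real (Suc (Suc (2 * m))) / (2::real) ^ Suc j"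
    "(2 * real m + 1) / 2 ^ (j + 1) = real (Suc (2 * m)) / (2::real) ^ Suc j"
    "real m / 2 ^ j = real (2 * m) / (2::real) ^ Suc j"
    by (simp_all add: field_simps)
  have "faber_coeff j m f = - (2 powr (real j / 2 - 1)) * ((w - v) - (v - u))"
    unfolding faber_coeff_def dyadic_points u_def v_def w_def by (simp add: algebra_simps)
  moreover have "(2 powr (real j / 2 - 1))\<^sup>2 = (2::real) powr (real j - 2)"
    by (subst powr_power) (simp_all add: algebra_simps)
  moreover have "(2::real) powr (real j - 2) = 2 ^ Suc j / 8"
    by (simp add: powr_diff powr_realpow)
  ultimately have "(faber_coeff j m f)\<^sup>2 = 2 ^ Suc j / 8 * ((w - v) - (v - u))\<^sup>2"
    by (simp add: power_mult_distrib)
  also have "\<dots> \<le> 2 ^ Suc j / 8 * (2 * ((v - u)\<^sup>2 + (w - v)\<^sup>2))"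
    using sum_squares_ge_zero[of "(w - v) + (v - u)" 0]
    by (intro mult_left_mono) (simp_all add: power2_eq_square algebra_simps)
  also have "\<dots> = (scaled_sq_incr f (Suc j) (2 * m) + scaled_sq_incr f (Suc j) (Suc (2 * m))) / 4"
    by (simp add: scaled_sq_incr_def u_def v_def w_def algebra_simps)
  finally show ?thesis .
qed

definition block_energy :: "(real \<Rightarrow> real) \<Rightarrow> nat \<Rightarrow> nat \<Rightarrow> nat \<Rightarrow> real" where
  "block_energy f j k l = (\<Sum>i\<in>dyad_block (Suc (j - k)) l. scaled_sq_incr f (Suc j) i)"

lemma sum_faber_coeff_sq_le_block_energy:
  "(\<Sum>m\<in>dyad_block (j - k) l. (faber_coeff j m f)\<^sup>2) \<le> block_energy f j k l / 4"
  unfolding block_energy_def sum_dyad_block_Suc sum_divide_distrib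
  by (intro sum_mono faber_coeff_sq_le)

lemma avg_abs_faber_level_le_block_energy:
  assumes kj: "k \<le> j" and l: "l < 2 ^ k" and e: "0 < e"
  shows "2 ^ k * integral (dyad_int k l) (\<lambda>x. \<bar>faber_level f j x\<bar>)
    \<le> e / 2 + block_energy f j k l / (8 * e * 2 ^ (j - k))"
proof -
  define B where "B = dyad_block (j - k) l"
  have AM_GM: "\<bar>a\<bar> \<le> e / 2 + a\<^sup>2 / (2 * e)" for a :: real
  proof -
    have "0 \<le> (\<bar>a\<bar> - e)\<^sup>2" by simp
    then show ?thesis using e by (simp add: field_simps power2_eq_square)
  qed
  have "2 ^ k * integral (dyad_int k l) (\<lambda>x. \<bar>faber_level f j x\<bar>)
      \<le> (\<Sum>m\<in>B. \<bar>faber_coeff j m f\<bar>) / 2 ^ (j - k)"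
    unfolding B_def by (rule avg_abs_faber_level_le_block_mean[OF kj l])
  also have "\<dots> \<le> (\<Sum>m\<in>B. e / 2 + (faber_coeff j m f)\<^sup>2 / (2 * e)) / 2 ^ (j - k)"
    by (intro divide_right_mono sum_mono AM_GM) simp
  also have "\<dots> = e / 2 + (\<Sum>m\<in>B. (faber_coeff j m f)\<^sup>2) / (2 * e * 2 ^ (j - k))"
    by (simp add: B_def sum.distrib sum_divide_distrib[symmetric] field_simps)
  also have "\<dots> \<le> e / 2 + block_energy f j k l / 4 / (2 * e * 2 ^ (j - k))"
    using e unfolding B_def
    by (intro add_left_mono divide_right_mono sum_faber_coeff_sq_le_block_energy) simp
  finally show ?thesis by simp
qed

lemma avg_abs_faber_level_le_sum_abs_faber_coeff:
  assumes kj: "k \<le> j" and l: "l < 2 ^ k"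
  shows "2 ^ k * integral (dyad_int k l) (\<lambda>x. \<bar>faber_level f j x\<bar>) \<le> (\<Sum>m<2 ^ j. \<bar>faber_coeff j m f\<bar>)"
proof -
  have "2 ^ k * integral (dyad_int k l) (\<lambda>x. \<bar>faber_level f j x\<bar>)
      \<le> (\<Sum>m\<in>dyad_block (j - k) l. \<bar>faber_coeff j m f\<bar>) / 2 ^ (j - k)"
    by (rule avg_abs_faber_level_le_block_mean[OF kj l])
  also have "\<dots> \<le> (\<Sum>m\<in>dyad_block (j - k) l. \<bar>faber_coeff j m f\<bar>)"
    using divide_left_mono[of 1 "2 ^ (j - k)" "\<Sum>m\<in>dyad_block (j - k) l. \<bar>faber_coeff j m f\<bar>"]
    by (simp add: sum_nonneg)
  also have "\<dots> \<le> (\<Sum>m<2 ^ j. \<bar>faber_coeff j m f\<bar>)"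
    using dyad_block_subset[OF l, of "j - k"] kj by (intro sum_mono2) auto
  finally show ?thesis .
qed

section \<open>Pathwise bounds on the quotients in the norm\<close>

definition tA_ratio :: "(real \<Rightarrow> real) \<Rightarrow> nat \<Rightarrow> nat \<Rightarrow> real \<Rightarrow> real" where
  "tA_ratio f j k t =
     rearr (avg_op_abs k (faber_level f j)) t / sqrt (2 powr (real k - real j) * ln (1 / t) + 1)"

lemma tA_norm_le:
  assumes "\<And>j k t. k \<le> j \<Longrightarrow> 0 < t \<Longrightarrow> t < 1 \<Longrightarrow> tA_ratio f j k t \<le> B"
  shows "tA_norm f \<le> ereal B"
  unfolding tA_norm_def by (intro SUP_least) (use assms in \<open>auto simp: tA_ratio_def\<close>)

(* The threshold serves both halves of the proof: below it the average of |f_j| over I_{k,l} is at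
  most 7/2 sqrt (n / 2^{j-k} + 1), and above it the Chernoff bound heavy_block_tail applies. *)
definition heavy_blocks :: "(real \<Rightarrow> real) \<Rightarrow> nat \<Rightarrow> nat \<Rightarrow> nat \<Rightarrow> nat set" where
  "heavy_blocks f j k n = {l\<in>{..<2 ^ k}. 12 * (real n + 1 + 2 ^ (j - k)) < block_energy f j k l}"

definition regular_level :: "(real \<Rightarrow> real) \<Rightarrow> nat \<Rightarrow> bool" where
  "regular_level f j \<longleftrightarrow> (\<forall>k\<le>j. \<forall>n. real (card (heavy_blocks f j k n)) \<le> 2 ^ k * exp (- (real n + 2)))"

lemma avg_abs_faber_level_le_of_light_block:
  assumes kj: "k \<le> j" and l: "l < 2 ^ k" and L: "0 \<le> L"
    and light: "block_energy f j k l \<le> 12 * (L + 1 + 2 ^ (j - k))"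
  shows "2 ^ k * integral (dyad_int k l) (\<lambda>x. \<bar>faber_level f j x\<bar>) \<le> 7 / 2 * sqrt (L / 2 ^ (j - k) + 1)"
proof -
  define b :: real where "b = 2 ^ (j - k)"
  define e where "e = sqrt (L / b + 1)"
  have b: "1 \<le> b" by (simp add: b_def)
  have e: "1 \<le> e" using L b by (simp add: e_def)
  have e_sq: "e\<^sup>2 * b = L + b" using L b by (simp add: e_def field_simps)
  have "2 ^ k * integral (dyad_int k l) (\<lambda>x. \<bar>faber_level f j x\<bar>) \<le> e / 2 + block_energy f j k l / (8 * e * b)"
    unfolding b_def using avg_abs_faber_level_le_block_energy[OF kj l, of e] e by simp
  also have "block_energy f j k l / (8 * e * b) \<le> 12 * (2 * (e\<^sup>2 * b)) / (8 * e * b)"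
    using light L b e unfolding e_sq b_def[symmetric] by (intro divide_right_mono) auto
  also have "12 * (2 * (e\<^sup>2 * b)) / (8 * e * b) = 3 * e"
    using e b by (simp add: field_simps power2_eq_square)
  finally show ?thesis by (simp add: e_def b_def)
qed

lemma tA_ratio_le_of_few_heavy_blocks:
  assumes kj: "k \<le> j" and t: "0 < t" "t < 1"
    and few: "\<And>n. real (card (heavy_blocks f j k n)) \<le> 2 ^ k * exp (- (real n + 2))"
  shows "tA_ratio f j k t \<le> 7 / 2"
proof -
  define L where "L = ln (1 / t)"
  define n where "n = nat \<lfloor>L\<rfloor>"
  define e where "e = sqrt (L / 2 ^ (j - k) + 1)"
  define c where "c l = 2 ^ k * integral (dyad_int k l) (\<lambda>x. \<bar>faber_level f j x\<bar>)" for l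
  have L: "0 < L" using t by (simp add: L_def)
  have n: "real n \<le> L" "L \<le> real n + 2"
    using L by (simp_all add: n_def) linarith
  have e: "1 \<le> e" using L by (simp add: e_def)
  have "{l\<in>{..<2 ^ k}. 7 / 2 * e < \<bar>c l\<bar>} \<subseteq> heavy_blocks f j k n"
  proof safe
    fix l assume l: "l < 2 ^ k" and big: "7 / 2 * e < \<bar>c l\<bar>"
    show "l \<in> heavy_blocks f j k n"
    proof (rule ccontr)
      assume "l \<notin> heavy_blocks f j k n"
      then have "block_energy f j k l \<le> 12 * (L + 1 + 2 ^ (j - k))"
        using l n by (auto simp: heavy_blocks_def)
      then have "c l \<le> 7 / 2 * e"
        unfolding c_def e_def using avg_abs_faber_level_le_of_light_block[OF kj l] L by simp
      with big show False by (simp add: c_def integral_abs_nonneg)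
    qed
  qed
  then have "real (card {l\<in>{..<2 ^ k}. 7 / 2 * e < \<bar>c l\<bar>}) \<le> 2 ^ k * exp (- (real n + 2))"
    by (intro order_trans[OF _ few] of_nat_mono card_mono) (auto simp: heavy_blocks_def)
  also have "\<dots> \<le> 2 ^ k * t"
  proof -
    have "exp (- (real n + 2)) \<le> exp (- L)" using n by simp
    also have "exp (- L) = t" using t by (simp add: L_def ln_div)
    finally show ?thesis by simp
  qed
  finally have "rearr (avg_op_abs k (faber_level f j)) t \<le> 7 / 2 * e"
    unfolding avg_op_abs_eq using e by (intro rearr_step_function_le) (simp_all add: c_def)
  moreover have "sqrt (2 powr (real k - real j) * ln (1 / t) + 1) = e"
    using kj by (simp add: e_def L_def powr_diff powr_realpow power_diff)
  ultimately show ?thesis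
    using e by (simp add: tA_ratio_def divide_le_eq)
qed

lemma tA_ratio_le_sum_abs_faber_coeff:
  assumes kj: "k \<le> j" and t: "0 < t" "t < 1"
  shows "tA_ratio f j k t \<le> (\<Sum>m<2 ^ j. \<bar>faber_coeff j m f\<bar>)"
proof -
  define S where "S = (\<Sum>m<2 ^ j. \<bar>faber_coeff j m f\<bar>)"
  define r where "r = rearr (avg_op_abs k (faber_level f j)) t"
  define d where "d = sqrt (2 powr (real k - real j) * ln (1 / t) + 1)"
  have d: "1 \<le> d" using t by (simp add: d_def)
  have "\<bar>2 ^ k * integral (dyad_int k l) (\<lambda>x. \<bar>faber_level f j x\<bar>)\<bar> \<le> S" if "l < 2 ^ k" for l
    using avg_abs_faber_level_le_sum_abs_faber_coeff[OF kj that] by (simp add: S_def integral_abs_nonneg)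
  then have none: "{l\<in>{..<2 ^ k}. S < \<bar>2 ^ k * integral (dyad_int k l) (\<lambda>x. \<bar>faber_level f j x\<bar>)\<bar>} = {}"
    by fastforce
  have S: "0 \<le> S" by (simp add: S_def sum_nonneg)
  have "r \<le> S"
    unfolding r_def avg_op_abs_eq
  proof (rule rearr_step_function_le[OF S])
    show "real (card {l\<in>{..<2 ^ k}. S < \<bar>2 ^ k * integral (dyad_int k l) (\<lambda>x. \<bar>faber_level f j x\<bar>)\<bar>})
        \<le> 2 ^ k * t"
      unfolding none using t by simp
  qed
  with S have "r / d \<le> S"
    using d by (cases "r \<le> 0") (auto simp: divide_le_eq divide_nonpos_pos intro: order_trans)
  then show ?thesis by (simp add: tA_ratio_def S_def r_def d_def)
qed

lemma tA_norm_finite_if_eventually_regular: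
  assumes "eventually (regular_level f) sequentially"
  shows "tA_norm f < \<infinity>"
proof -
  obtain J where J: "\<And>j. J \<le> j \<Longrightarrow> regular_level f j"
    using assms by (auto simp: eventually_sequentially)
  define S where "S j = (\<Sum>m<2 ^ j. \<bar>faber_coeff j m f\<bar>)" for j
  have S: "0 \<le> S j" for j by (simp add: S_def sum_nonneg)
  have "tA_ratio f j k t \<le> 7 / 2 + (\<Sum>i<J. S i)" if "k \<le> j" "0 < t" "t < 1" for j k t
  proof (cases "j < J")
    case True
    then have "S j \<le> (\<Sum>i<J. S i)" using S by (intro member_le_sum) auto
    then show ?thesis using tA_ratio_le_sum_abs_faber_coeff[OF that, of f] S[of j] by (simp add: S_def)
  next
    case False
    then have "tA_ratio f j k t \<le> 7 / 2"
      using J[of j] that by (intro tA_ratio_le_of_few_heavy_blocks) (auto simp: regular_level_def)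
    then show ?thesis using S by (simp add: sum_nonneg add_increasing2)
  qed
  then have "tA_norm f \<le> ereal (7 / 2 + (\<Sum>i<J. S i))" by (rule tA_norm_le)
  then show ?thesis by (rule le_less_trans) simp
qed

section \<open>Exponential moments of Wiener increments\<close>

lemma normal_density_mult_exp_sq:
  fixes s x :: real
  assumes s: "0 < s"
  shows "normal_density 0 s x * exp (x\<^sup>2 / (4 * s\<^sup>2)) = sqrt 2 * normal_density 0 (sqrt 2 * s) x"
proof -
  have "exp (- (x\<^sup>2) / (2 * s\<^sup>2)) * exp (x\<^sup>2 / (4 * s\<^sup>2)) = exp (- (x\<^sup>2) / (2 * (sqrt 2 * s)\<^sup>2))"
    unfolding exp_add[symmetric] using s by (simp add: field_simps power2_eq_square)
  moreover have "1 / sqrt (2 * pi * s\<^sup>2) = sqrt 2 * (1 / sqrt (2 * pi * (sqrt 2 * s)\<^sup>2))"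
    using s by (simp add: power_mult_distrib real_sqrt_mult field_simps)
  ultimately show ?thesis
    unfolding normal_density_def by (simp add: mult.assoc)
qed

lemma nn_integral_normal_density_exp_sq:
  fixes s :: real
  assumes s: "0 < s"
  shows "(\<integral>\<^sup>+x. ennreal (normal_density 0 s x) * ennreal (exp (x\<^sup>2 / (4 * s\<^sup>2))) \<partial>lborel) = ennreal (sqrt 2)"
proof -
  have "(\<integral>\<^sup>+x. ennreal (normal_density 0 s x) * ennreal (exp (x\<^sup>2 / (4 * s\<^sup>2))) \<partial>lborel)
      = (\<integral>\<^sup>+x. ennreal (sqrt 2) * ennreal (normal_density 0 (sqrt 2 * s) x) \<partial>lborel)"
    by (intro nn_integral_cong) (simp add: ennreal_mult[symmetric] normal_density_mult_exp_sq[OF s])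
  also have "\<dots> = ennreal (sqrt 2) * (\<integral>\<^sup>+x. ennreal (normal_density 0 (sqrt 2 * s) x) \<partial>lborel)"
    by (rule nn_integral_cmult) simp
  also have "(\<integral>\<^sup>+x. ennreal (normal_density 0 (sqrt 2 * s) x) \<partial>lborel) = 1"
    using s by (subst nn_integral_eq_integral) auto
  finally show ?thesis by simp
qed

context prob_space
begin

lemma wiener_process_borel_measurable:
  assumes "wiener_process M W" and "0 \<le> t"
  shows "W t \<in> borel_measurable M"
  using assms unfolding wiener_process_def by blast

lemma borel_measurable_scaled_sq_incr [measurable]:
  assumes W: "wiener_process M W"
  shows "(\<lambda>\<omega>. scaled_sq_incr (\<lambda>t. W t \<omega>) j i) \<in> borel_measurable M"
proof -
  have [measurable]: "W (real (Suc i) / 2 ^ j) \<in> borel_measurable M" "W (real i / 2 ^ j) \<in> borel_measurable M"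
    by (simp_all add: wiener_process_borel_measurable[OF W])
  show ?thesis unfolding scaled_sq_incr_def by measurable
qed

lemma borel_measurable_block_energy [measurable]:
  assumes "wiener_process M W"
  shows "(\<lambda>\<omega>. block_energy (\<lambda>t. W t \<omega>) j k l) \<in> borel_measurable M"
  unfolding block_energy_def using borel_measurable_scaled_sq_incr[OF assms] by measurable

lemma nn_integral_exp_scaled_sq_incr:
  assumes W: "wiener_process M W"
  shows "(\<integral>\<^sup>+\<omega>. ennreal (exp (scaled_sq_incr (\<lambda>t. W t \<omega>) j i / 4)) \<partial>M) = ennreal (sqrt 2)"
proof -
  define s t where "s = real i / 2 ^ j" and "t = real (Suc i) / 2 ^ j"
  define \<sigma> where "\<sigma> = sqrt (t - s)"
  have st: "0 \<le> s" "s < t" by (auto simp: s_def t_def divide_strict_right_mono)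
  have \<sigma>: "0 < \<sigma>" "\<sigma>\<^sup>2 = 1 / 2 ^ j"
    using st by (simp_all add: \<sigma>_def s_def t_def diff_divide_distrib[symmetric])
  have "distributed M lborel (\<lambda>\<omega>. W t \<omega> - W s \<omega>) (\<lambda>x. ennreal (normal_density 0 \<sigma> x))"
    using W st unfolding wiener_process_def \<sigma>_def by blast
  then have "(\<integral>\<^sup>+x. ennreal (normal_density 0 \<sigma> x) * ennreal (exp (x\<^sup>2 / (4 * \<sigma>\<^sup>2))) \<partial>lborel)
      = (\<integral>\<^sup>+\<omega>. ennreal (exp ((W t \<omega> - W s \<omega>)\<^sup>2 / (4 * \<sigma>\<^sup>2))) \<partial>M)"
    by (rule distributed_nn_integral) simp
  also have "\<dots> = (\<integral>\<^sup>+\<omega>. ennreal (exp (scaled_sq_incr (\<lambda>t. W t \<omega>) j i / 4)) \<partial>M)"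
    by (intro nn_integral_cong) (simp add: scaled_sq_incr_def \<sigma> s_def t_def field_simps)
  finally show ?thesis
    using nn_integral_normal_density_exp_sq[OF \<sigma>(1)] by simp
qed

lemma indep_vars_scaled_sq_incr:
  assumes W: "wiener_process M W"
  shows "indep_vars (\<lambda>_. borel) (\<lambda>i \<omega>. scaled_sq_incr (\<lambda>t. W t \<omega>) j i) {..<2 ^ j}"
proof -
  define ts :: "nat \<Rightarrow> real" where "ts i = real i / 2 ^ j" for i
  have "0 \<le> ts 0 \<and> (\<forall>i<2 ^ j. ts i < ts (Suc i))"
    by (auto simp: ts_def divide_strict_right_mono)
  then have "indep_vars (\<lambda>_. borel) (\<lambda>i \<omega>. W (ts (Suc i)) \<omega> - W (ts i) \<omega>) {..<2 ^ j}"
    using W unfolding wiener_process_def by blast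
  then have "indep_vars (\<lambda>_. borel) (\<lambda>i \<omega>. (\<lambda>x. 2 ^ j * x\<^sup>2) (W (ts (Suc i)) \<omega> - W (ts i) \<omega>)) {..<2 ^ j}"
    by (rule indep_vars_compose2) simp
  then show ?thesis
    by (simp add: scaled_sq_incr_def ts_def)
qed

lemma nn_integral_exp_sum_scaled_sq_incr:
  assumes W: "wiener_process M W" and B: "B \<subseteq> {..<2 ^ j}"
  shows "(\<integral>\<^sup>+\<omega>. ennreal (exp ((\<Sum>i\<in>B. scaled_sq_incr (\<lambda>t. W t \<omega>) j i) / 4)) \<partial>M) = ennreal (sqrt 2) ^ card B"
proof -
  have B_fin: "finite B" using B finite_subset by blast
  have "indep_vars (\<lambda>_. borel) (\<lambda>i \<omega>. ennreal (exp (scaled_sq_incr (\<lambda>t. W t \<omega>) j i / 4))) B"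
    by (rule indep_vars_compose2[OF indep_vars_subset[OF indep_vars_scaled_sq_incr[OF W] B]]) simp
  then have "(\<integral>\<^sup>+\<omega>. (\<Prod>i\<in>B. ennreal (exp (scaled_sq_incr (\<lambda>t. W t \<omega>) j i / 4))) \<partial>M)
      = (\<Prod>i\<in>B. \<integral>\<^sup>+\<omega>. ennreal (exp (scaled_sq_incr (\<lambda>t. W t \<omega>) j i / 4)) \<partial>M)"
    by (rule indep_vars_nn_integral[OF B_fin]) simp
  then show ?thesis
    by (simp add: nn_integral_exp_scaled_sq_incr[OF W] exp_sum sum_divide_distrib B_fin prod_ennreal)
qed

lemma prob_block_energy_gt:
  assumes W: "wiener_process M W" and kj: "k \<le> j" and l: "l < 2 ^ k"
  shows "prob {\<omega>\<in>space M. c < block_energy (\<lambda>t. W t \<omega>) j k l} \<le> 2 ^ 2 ^ (j - k) * exp (- c / 4)"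
proof -
  define T where "T \<omega> = block_energy (\<lambda>t. W t \<omega>) j k l" for \<omega>
  have [measurable]: "T \<in> borel_measurable M"
    unfolding T_def using W by (rule borel_measurable_block_energy)
  have block: "dyad_block (Suc (j - k)) l \<subseteq> {..<2 ^ Suc j}"
    using dyad_block_subset[OF l, of "Suc (j - k)"] kj by simp
  have "(\<integral>\<^sup>+\<omega>. ennreal (exp (1 / 4 * T \<omega>)) * indicator (space M) \<omega> \<partial>M) = (\<integral>\<^sup>+\<omega>. ennreal (exp (T \<omega> / 4)) \<partial>M)"
    by (intro nn_integral_cong) (simp add: ac_simps)
  also have "\<dots> = ennreal (sqrt 2) ^ (2 * 2 ^ (j - k))"
    using nn_integral_exp_sum_scaled_sq_incr[OF W block] by (simp add: T_def block_energy_def)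
  also have "\<dots> = ennreal (2 ^ 2 ^ (j - k))"
    by (subst ennreal_power) (simp_all add: power_mult)
  finally have moment: "(\<integral>\<^sup>+\<omega>. ennreal (exp (1 / 4 * T \<omega>)) * indicator (space M) \<omega> \<partial>M) = ennreal (2 ^ 2 ^ (j - k))" .
  have "emeasure M {\<omega>\<in>space M. c < T \<omega>} \<le> emeasure M {\<omega>\<in>space M. c \<le> T \<omega>}"
    by (intro emeasure_mono) auto
  also have "\<dots> \<le> ennreal (exp (- (1 / 4) * c)) * ennreal (2 ^ 2 ^ (j - k))"
    unfolding moment[symmetric] by (rule Chernoff_ineq_nn_integral_ge) auto
  finally show ?thesis
    by (simp add: T_def emeasure_eq_measure ennreal_mult[symmetric] mult.commute)
qed
lemma indep_vars_block_energy:
  assumes W: "wiener_process M W" and kj: "k \<le> j"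
  shows "indep_vars (\<lambda>_. borel) (\<lambda>l \<omega>. block_energy (\<lambda>t. W t \<omega>) j k l) {..<2 ^ k}"
proof -
  define K where "K = dyad_block (Suc (j - k))"
  have K: "K l \<subseteq> {..<2 ^ Suc j}" if "l \<in> {..<2 ^ k}" for l
    using dyad_block_subset[of l k "Suc (j - k)"] that kj by (simp add: K_def)
  have "indep_vars (\<lambda>l. PiM (K l) (\<lambda>_. borel))
      (\<lambda>l \<omega>. restrict (\<lambda>i. scaled_sq_incr (\<lambda>t. W t \<omega>) (Suc j) i) (K l)) {..<2 ^ k}"
    using disjoint_family_dyad_block
    by (intro indep_vars_restrict[OF indep_vars_scaled_sq_incr[OF W] K])
       (auto simp: K_def disjoint_family_on_def)
  then have "indep_vars (\<lambda>_. borel)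
      (\<lambda>l \<omega>. (\<lambda>g. \<Sum>i\<in>K l. g i) (restrict (\<lambda>i. scaled_sq_incr (\<lambda>t. W t \<omega>) (Suc j) i) (K l))) {..<2 ^ k}"
    by (rule indep_vars_compose2) (intro borel_measurable_sum measurable_component_singleton)
  then show ?thesis
    by (rule indep_vars_cong[THEN iffD1, rotated 3]) (simp_all add: fun_eq_iff block_energy_def K_def)
qed

lemma prob_block_energy_gt_Int:
  assumes W: "wiener_process M W" and kj: "k \<le> j" and l: "l < 2 ^ k" "l' < 2 ^ k" "l \<noteq> l'"
  shows "prob ({\<omega>\<in>space M. c < block_energy (\<lambda>t. W t \<omega>) j k l} \<inter> {\<omega>\<in>space M. c < block_energy (\<lambda>t. W t \<omega>) j k l'})
    = prob {\<omega>\<in>space M. c < block_energy (\<lambda>t. W t \<omega>) j k l} * prob {\<omega>\<in>space M. c < block_energy (\<lambda>t. W t \<omega>) j k l'}"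
proof -
  have "{\<omega>\<in>space M. c < block_energy (\<lambda>t. W t \<omega>) j k i} = (\<lambda>\<omega>. block_energy (\<lambda>t. W t \<omega>) j k i) -` {c<..} \<inter> space M"
    for i by auto
  then show ?thesis
    using indep_varsD[OF indep_vars_block_energy[OF W kj], of "{l, l'}" "\<lambda>_. {c<..}"] l by simp
qed

lemma count_events_second_moment:
  fixes E :: "'i \<Rightarrow> 'a set"
  assumes L: "finite L" and E: "\<And>l. l \<in> L \<Longrightarrow> E l \<in> events"
    and pair: "\<And>l l'. l \<in> L \<Longrightarrow> l' \<in> L \<Longrightarrow> l \<noteq> l' \<Longrightarrow> prob (E l \<inter> E l') = prob (E l) * prob (E l')"
  defines "Y \<equiv> \<lambda>\<omega>. \<Sum>l\<in>L. indicator (E l) \<omega> - prob (E l)"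
  shows "integrable M (\<lambda>\<omega>. (Y \<omega>)\<^sup>2)" and "expectation (\<lambda>\<omega>. (Y \<omega>)\<^sup>2) \<le> (\<Sum>l\<in>L. prob (E l))"
proof -
  define g where "g l l' \<omega> = (indicator (E l) \<omega> - prob (E l)) * (indicator (E l') \<omega> - prob (E l'))"
    for l l' and \<omega> :: 'a
  have g_eq: "g l l' \<omega> = indicator (E l \<inter> E l') \<omega> - prob (E l') * indicator (E l) \<omega>
      - prob (E l) * indicator (E l') \<omega> + prob (E l) * prob (E l')" for l l' \<omega>
    unfolding g_def indicator_inter_arith by (simp add: algebra_simps)
  have ind: "integrable M (indicator A :: 'a \<Rightarrow> real)" if "A \<in> events" for A
    using that by (simp add: emeasure_eq_measure)
  have g_int: "integrable M (g l l')" if "l \<in> L" "l' \<in> L" for l l'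
    unfolding g_eq[abs_def] using ind E that by simp
  have g_exp: "expectation (g l l') \<le> (if l = l' then prob (E l) else 0)" if "l \<in> L" "l' \<in> L" for l l'
  proof -
    have "expectation (g l l') = prob (E l \<inter> E l') - prob (E l) * prob (E l')"
      unfolding g_eq[abs_def] using ind E that by (simp add: sets.Int_space_eq2 prob_space)
    then show ?thesis
      using pair[OF that] by (cases "l = l'") (simp_all add: mult_le_cancel_left1)
  qed
  have Y_sq: "(Y \<omega>)\<^sup>2 = (\<Sum>l\<in>L. \<Sum>l'\<in>L. g l l' \<omega>)" for \<omega>
    unfolding Y_def g_def power2_eq_square sum_product ..
  show "integrable M (\<lambda>\<omega>. (Y \<omega>)\<^sup>2)"
    unfolding Y_sq using g_int by (intro Bochner_Integration.integrable_sum) auto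
  have "expectation (\<lambda>\<omega>. (Y \<omega>)\<^sup>2) = (\<Sum>l\<in>L. \<Sum>l'\<in>L. expectation (g l l'))"
    unfolding Y_sq using g_int by (simp add: Bochner_Integration.integrable_sum)
  also have "\<dots> \<le> (\<Sum>l\<in>L. \<Sum>l'\<in>L. if l = l' then prob (E l) else 0)"
    using g_exp by (intro sum_mono) auto
  finally show "expectation (\<lambda>\<omega>. (Y \<omega>)\<^sup>2) \<le> (\<Sum>l\<in>L. prob (E l))"
    using L by simp
qed

lemma prob_card_events_gt:
  fixes E :: "'i \<Rightarrow> 'a set"
  assumes L: "finite L" and E: "\<And>l. l \<in> L \<Longrightarrow> E l \<in> events"
    and pair: "\<And>l l'. l \<in> L \<Longrightarrow> l' \<in> L \<Longrightarrow> l \<noteq> l' \<Longrightarrow> prob (E l \<inter> E l') = prob (E l) * prob (E l')"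
    and N: "0 < N" "2 * (\<Sum>l\<in>L. prob (E l)) \<le> N"
  shows "prob {\<omega>\<in>space M. N < real (card {l\<in>L. \<omega> \<in> E l})} \<le> 4 * (\<Sum>l\<in>L. prob (E l)) / N\<^sup>2"
proof -
  define Y where "Y \<omega> = (\<Sum>l\<in>L. indicator (E l) \<omega> - prob (E l))" for \<omega>
  have Y_int: "integrable M (\<lambda>\<omega>. (Y \<omega>)\<^sup>2)"
    and Y_exp: "expectation (\<lambda>\<omega>. (Y \<omega>)\<^sup>2) \<le> (\<Sum>l\<in>L. prob (E l))"
    using count_events_second_moment[OF L E pair] by (simp_all add: Y_def)
  have [measurable]: "Y \<in> borel_measurable M"
    unfolding Y_def[abs_def] using E by (intro borel_measurable_sum borel_measurable_diff borel_measurable_indicator) auto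
  have card_eq: "real (card {l\<in>L. \<omega> \<in> E l}) = Y \<omega> + (\<Sum>l\<in>L. prob (E l))" for \<omega>
  proof -
    have "real (card {l\<in>L. \<omega> \<in> E l}) = (\<Sum>l\<in>L. indicator (E l) \<omega>)"
      using L by (simp add: indicator_def Int_def)
    then show ?thesis
      by (simp add: Y_def sum_subtractf)
  qed
  have "{\<omega>\<in>space M. N < real (card {l\<in>L. \<omega> \<in> E l})} \<subseteq> {\<omega>\<in>space M. (N / 2)\<^sup>2 \<le> (Y \<omega>)\<^sup>2}"
  proof safe
    fix \<omega> assume "N < real (card {l\<in>L. \<omega> \<in> E l})"
    then have "N / 2 \<le> Y \<omega>"
      using N card_eq[of \<omega>] by simp
    then show "(N / 2)\<^sup>2 \<le> (Y \<omega>)\<^sup>2"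
      using N by (intro power_mono) auto
  qed
  moreover have "{\<omega>\<in>space M. (N / 2)\<^sup>2 \<le> (Y \<omega>)\<^sup>2} \<in> events"
    by measurable
  ultimately have "prob {\<omega>\<in>space M. N < real (card {l\<in>L. \<omega> \<in> E l})} \<le> prob {\<omega>\<in>space M. (N / 2)\<^sup>2 \<le> (Y \<omega>)\<^sup>2}"
    by (rule finite_measure_mono)
  also have "\<dots> \<le> expectation (\<lambda>\<omega>. (Y \<omega>)\<^sup>2) / (N / 2)\<^sup>2"
    using N by (intro integral_Markov_inequality_measure[OF Y_int sets.top]) auto
  also have "\<dots> \<le> (\<Sum>l\<in>L. prob (E l)) / (N / 2)\<^sup>2"
    using Y_exp by (simp add: divide_right_mono)
  finally show ?thesis
    by (simp add: power2_eq_square mult.commute)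
qed

end

lemma two_pow_le_exp: "(2::real) ^ n \<le> exp (real n)"
proof -
  have "(2::real) ^ n = exp (real n * ln 2)" by (simp add: exp_of_nat_mult)
  also have "\<dots> \<le> exp (real n)" using ln_2_less_1 by (simp add: mult_left_le)
  finally show ?thesis .
qed

lemma exp_neg_le_half_pow: "exp (- real n) \<le> (1 / 2 :: real) ^ n"
  using two_pow_le_exp[of n] by (simp add: exp_minus power_one_over divide_simps)

lemma sum_half_pow_diff_le: "(\<Sum>k\<le>j. (1 / 2 :: real) ^ (j - k)) \<le> 2"
proof -
  have "(\<Sum>k\<le>j. (1 / 2 :: real) ^ (j - k)) = (\<Sum>k\<le>j. (1 / 2) ^ k)"
    by (rule sum.reindex_bij_witness[of _ "\<lambda>k. j - k" "\<lambda>k. j - k"]) auto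
  also have "\<dots> \<le> (\<Sum>k. (1 / 2 :: real) ^ k)"
    by (intro sum_le_suminf summable_geometric) auto
  also have "\<dots> = 2" by (simp add: suminf_geometric)
  finally show ?thesis .
qed

(* Chernoff bound for T_l > 12 (n + 1 + 2^d) when T_l is a sum of 2^{d+1} variables Z_i. *)
definition heavy_block_tail :: "nat \<Rightarrow> nat \<Rightarrow> real" where
  "heavy_block_tail d n = 2 ^ 2 ^ d * exp (- 3 * (real n + 1 + 2 ^ d))"

lemma heavy_block_tail_le: "heavy_block_tail d n \<le> exp (- 3 * real n - 3 - 2 * 2 ^ d)"
proof -
  have "heavy_block_tail d n \<le> exp (2 ^ d) * exp (- 3 * (real n + 1 + 2 ^ d))"
    unfolding heavy_block_tail_def using two_pow_le_exp[of "2 ^ d"] by (intro mult_right_mono) auto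
  also have "\<dots> = exp (- 3 * real n - 3 - 2 * 2 ^ d)"
    by (simp add: exp_add[symmetric] algebra_simps)
  finally show ?thesis .
qed

lemma two_heavy_block_tail_le: "2 * heavy_block_tail d n \<le> exp (- (real n + 2))"
proof -
  have "2 * heavy_block_tail d n \<le> exp 1 * exp (- 3 * real n - 3 - 2 * 2 ^ d)"
    using heavy_block_tail_le exp_ge_add_one_self[of 1]
    by (intro mult_mono) (auto simp: heavy_block_tail_def)
  also have "\<dots> \<le> exp (- (real n + 2))"
    by (simp add: exp_add[symmetric]) (rule order_trans[of _ 0], simp_all)
  finally show ?thesis .
qed

lemma heavy_blocks_chebyshev_bound_le:
  fixes j k n :: nat
  assumes kj: "k \<le> j"
  shows "4 * (2 ^ k * heavy_block_tail (j - k) n) / (2 ^ k * exp (- (real n + 2)))\<^sup>2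
    \<le> 4 * exp 1 * (1 / 2) ^ n * (1 / 2) ^ j * (1 / 2) ^ (j - k)"
proof -
  define P where "P = heavy_block_tail (j - k) n"
  define b :: nat where "b = 2 ^ (j - k)"
  have "4 * (2 ^ k * P) / (2 ^ k * exp (- (real n + 2)))\<^sup>2 = 4 * (P * exp (2 * real n + 4)) / 2 ^ k"
    by (simp add: power2_eq_square exp_minus field_simps exp_add[symmetric])
  also have "\<dots> \<le> 4 * (exp 1 * exp (- real n) * exp (- real (2 * b))) / 2 ^ k"
  proof -
    have "P * exp (2 * real n + 4) \<le> exp (- 3 * real n - 3 - 2 * real b) * exp (2 * real n + 4)"
      using heavy_block_tail_le[of "j - k" n] by (intro mult_right_mono) (auto simp: P_def b_def)
    also have "\<dots> = exp 1 * exp (- real n) * exp (- real (2 * b))"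
      unfolding mult_exp_exp by (simp add: algebra_simps)
    finally show ?thesis by (intro divide_right_mono mult_left_mono) auto
  qed
  also have "\<dots> \<le> 4 * (exp 1 * (1 / 2) ^ n * (1 / 2) ^ (2 * b)) / 2 ^ k"
    by (intro divide_right_mono mult_left_mono mult_mono exp_neg_le_half_pow) auto
  also have "\<dots> \<le> 4 * (exp 1 * (1 / 2) ^ n * (1 / 2) ^ (2 * (j - k))) / 2 ^ k"
    unfolding b_def
    by (intro divide_right_mono mult_left_mono power_decreasing) (auto intro: less_imp_le less_exp)
  also have "\<dots> = 4 * exp 1 * (1 / 2) ^ n * (1 / 2) ^ j * (1 / 2) ^ (j - k)"
    using kj by (simp add: power_diff power_mult_distrib power_one_over field_simps flip: power_add mult_2)
  finally show ?thesis
    unfolding P_def .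
qed

context prob_space
begin

lemma borel_measurable_card_heavy_blocks [measurable]:
  assumes "wiener_process M W"
  shows "(\<lambda>\<omega>. real (card (heavy_blocks (\<lambda>t. W t \<omega>) j k n))) \<in> borel_measurable M"
proof -
  have "(\<lambda>\<omega>. real (card (heavy_blocks (\<lambda>t. W t \<omega>) j k n)))
      = (\<lambda>\<omega>. \<Sum>l<2 ^ k. of_bool (12 * (real n + 1 + 2 ^ (j - k)) < block_energy (\<lambda>t. W t \<omega>) j k l))"
    by (simp add: fun_eq_iff heavy_blocks_def Int_def)
  then show ?thesis
    using assms by simp
qed

lemma prob_many_heavy_blocks:
  assumes W: "wiener_process M W" and kj: "k \<le> j"
  shows "prob {\<omega>\<in>space M. 2 ^ k * exp (- (real n + 2)) < real (card (heavy_blocks (\<lambda>t. W t \<omega>) j k n))}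
    \<le> 4 * exp 1 * (1 / 2) ^ n * (1 / 2) ^ j * (1 / 2) ^ (j - k)"
proof -
  define c where "c = 12 * (real n + 1 + 2 ^ (j - k))"
  define E where "E l = {\<omega>\<in>space M. c < block_energy (\<lambda>t. W t \<omega>) j k l}" for l
  have E: "E l \<in> events" for l
    unfolding E_def using W by measurable
  have "prob (E l) \<le> heavy_block_tail (j - k) n" if "l < 2 ^ k" for l
  proof -
    have "- c / 4 = - 3 * (real n + 1 + 2 ^ (j - k))"
      by (simp add: c_def)
    then show ?thesis
      using prob_block_energy_gt[OF W kj that, of c] by (simp add: E_def heavy_block_tail_def)
  qed
  then have sum_prob_E: "(\<Sum>l<2 ^ k. prob (E l)) \<le> 2 ^ k * heavy_block_tail (j - k) n"
    using sum_mono[of "{..<2 ^ k}" "\<lambda>l. prob (E l)" "\<lambda>_. heavy_block_tail (j - k) n"] by simp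
  have "heavy_blocks (\<lambda>t. W t \<omega>) j k n = {l\<in>{..<2 ^ k}. \<omega> \<in> E l}" if "\<omega> \<in> space M" for \<omega>
    using that by (auto simp: heavy_blocks_def E_def c_def)
  then have "prob {\<omega>\<in>space M. 2 ^ k * exp (- (real n + 2)) < real (card (heavy_blocks (\<lambda>t. W t \<omega>) j k n))}
      = prob {\<omega>\<in>space M. 2 ^ k * exp (- (real n + 2)) < real (card {l\<in>{..<2 ^ k}. \<omega> \<in> E l})}"
    by (simp cong: conj_cong)
  also have "\<dots> \<le> 4 * (\<Sum>l<2 ^ k. prob (E l)) / (2 ^ k * exp (- (real n + 2)))\<^sup>2"
  proof (intro prob_card_events_gt E)
    show "prob (E l \<inter> E l') = prob (E l) * prob (E l')" if "l \<in> {..<2 ^ k}" "l' \<in> {..<2 ^ k}" "l \<noteq> l'" for l l'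
      unfolding E_def using that by (intro prob_block_energy_gt_Int[OF W kj]) auto
    have "2 * (\<Sum>l<2 ^ k. prob (E l)) \<le> 2 ^ k * (2 * heavy_block_tail (j - k) n)"
      using sum_prob_E by simp
    also have "\<dots> \<le> 2 ^ k * exp (- (real n + 2))"
      using two_heavy_block_tail_le[of "j - k" n] by simp
    finally show "2 * (\<Sum>l<2 ^ k. prob (E l)) \<le> 2 ^ k * exp (- (real n + 2))" .
  qed auto
  also have "\<dots> \<le> 4 * (2 ^ k * heavy_block_tail (j - k) n) / (2 ^ k * exp (- (real n + 2)))\<^sup>2"
    using sum_prob_E by (intro divide_right_mono) auto
  also have "\<dots> \<le> 4 * exp 1 * (1 / 2) ^ n * (1 / 2) ^ j * (1 / 2) ^ (j - k)"
    by (rule heavy_blocks_chebyshev_bound_le[OF kj])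
  finally show ?thesis .
qed

lemma prob_UN_many_heavy_blocks:
  assumes W: "wiener_process M W" and kj: "k \<le> j"
  shows "prob (\<Union>n. {\<omega>\<in>space M. 2 ^ k * exp (- (real n + 2)) < real (card (heavy_blocks (\<lambda>t. W t \<omega>) j k n))})
    \<le> 8 * exp 1 * (1 / 2) ^ j * (1 / 2) ^ (j - k)"
proof -
  define A where "A n = {\<omega>\<in>space M. 2 ^ k * exp (- (real n + 2)) < real (card (heavy_blocks (\<lambda>t. W t \<omega>) j k n))}"
    for n
  define C :: real where "C = 4 * exp 1 * (1 / 2) ^ j * (1 / 2) ^ (j - k)"
  have A: "A n \<in> events" for n
    unfolding A_def using W by measurable
  have bound: "prob (A n) \<le> C * (1 / 2) ^ n" for n
    using prob_many_heavy_blocks[OF W kj, of n] by (simp add: A_def C_def mult_ac)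
  have summable: "summable (\<lambda>n. C * (1 / 2 :: real) ^ n)"
    by simp
  have summable_A: "summable (\<lambda>n. prob (A n))"
    using bound by (intro summable_comparison_test'[OF summable]) auto
  have "prob (\<Union>n. A n) \<le> (\<Sum>n. prob (A n))"
    using A summable_A by (intro finite_measure_subadditive_countably) auto
  also have "\<dots> \<le> (\<Sum>n. C * (1 / 2) ^ n)"
    by (intro suminf_le bound summable_A summable)
  also have "\<dots> = 2 * C"
    by (simp add: suminf_mult suminf_geometric)
  finally show ?thesis
    by (simp add: A_def C_def)
qed

lemma prob_not_regular_level:
  assumes W: "wiener_process M W"
  shows "prob {\<omega>\<in>space M. \<not> regular_level (\<lambda>t. W t \<omega>) j} \<le> 16 * exp 1 * (1 / 2) ^ j"
proof -
  define A where "A k = (\<Union>n. {\<omega>\<in>space M. 2 ^ k * exp (- (real n + 2)) < real (card (heavy_blocks (\<lambda>t. W t \<omega>) j k n))})"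
    for k
  have A: "A k \<in> events" for k
    unfolding A_def using W by measurable
  have "{\<omega>\<in>space M. \<not> regular_level (\<lambda>t. W t \<omega>) j} = (\<Union>k\<in>{..j}. A k)"
    by (auto simp: A_def regular_level_def not_le)
  then have "prob {\<omega>\<in>space M. \<not> regular_level (\<lambda>t. W t \<omega>) j} \<le> (\<Sum>k\<le>j. prob (A k))"
    using A by (simp add: measure_UNION_le)
  also have "\<dots> \<le> (\<Sum>k\<le>j. 8 * exp 1 * (1 / 2) ^ j * (1 / 2) ^ (j - k))"
    unfolding A_def by (intro sum_mono prob_UN_many_heavy_blocks[OF W]) simp
  also have "\<dots> = 8 * exp 1 * (1 / 2) ^ j * (\<Sum>k\<le>j. (1 / 2 :: real) ^ (j - k))"
    by (simp add: sum_distrib_left)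
  also have "\<dots> \<le> 8 * exp 1 * (1 / 2) ^ j * 2"
    by (intro mult_left_mono sum_half_pow_diff_le) simp
  finally show ?thesis by simp
qed

lemma AE_eventually_regular_level:
  assumes W: "wiener_process M W"
  shows "AE \<omega> in M. eventually (regular_level (\<lambda>t. W t \<omega>)) sequentially"
proof -
  have "AE \<omega> in M. eventually (\<lambda>j. \<omega> \<in> space M - {\<omega>\<in>space M. \<not> regular_level (\<lambda>t. W t \<omega>) j}) sequentially"
  proof (rule borel_cantelli_AE1)
    show "{\<omega>\<in>space M. \<not> regular_level (\<lambda>t. W t \<omega>) j} \<in> events" for j
      unfolding regular_level_def using W by measurable
    show "emeasure M {\<omega>\<in>space M. \<not> regular_level (\<lambda>t. W t \<omega>) j} < \<infinity>" for j
      by (simp add: emeasure_eq_measure)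
    have "summable (\<lambda>j. 16 * exp 1 * (1 / 2 :: real) ^ j)"
      by simp
    then show "summable (\<lambda>j. prob {\<omega>\<in>space M. \<not> regular_level (\<lambda>t. W t \<omega>) j})"
      by (rule summable_comparison_test') (use prob_not_regular_level[OF W] in simp)
  qed
  then show ?thesis
    by (rule AE_mp) (intro AE_I2 impI, erule eventually_mono, simp)
qed

end

theorem theorem2p10:
  fixes M :: "'a measure" and W :: "real \<Rightarrow> 'a \<Rightarrow> real"
  assumes "wiener_process M W"
  shows "AE \<omega> in M. tA_norm (\<lambda>t. W t \<omega>) < \<infinity>"
proof -
  interpret prob_space M
    using assms by (simp add: wiener_process_def)
  show ?thesis
    using AE_eventually_regular_level[OF assms]
    by eventually_elim (rule tA_norm_finite_if_eventually_regular)
qed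

end
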